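(* There is no $*$-term $P$ such that $se(P)=X[\triangle\mapsto Y]$ for some $X\in\mathcal T_{A,\triangle}$ and $Y\in\mathcal T_A$ where $X\neq\triangle$, $X$ contains a leaf $\triangle$, and $X$ contains no leaf $\mathsf T$ and no leaf $\mathsf F$.
   Context: Let $A$ be a nonempty set of atoms; terms are closed terms over constants $\mathsf T,\mathsf F$, atoms $a\in A$, unary $\neg$, binary $\land^\circ$, $\lor^\circ$. Evaluation trees $\mathcal T_A$: $\mathsf T,\mathsf F\in\mathcal T_A$ and $(X\unlhd a\unrhd Y)\in\mathcal T_A$ for $X,Y\in\mathcal T_A$, $a\in A$. $\mathcal T_{A,\triangle}$: the same with leaves in $\{\mathsf T,\mathsf F,\triangle\}$. Leaf replacement $X[\ell_1\mapsto Y_1,\ldots]$ replaces every leaf labelled $\ell_i$ by $Y_i$. $se$: $se(\mathsf T)=\mathsf T$, $se(\mathsf F)=\mathsf F$, $se(a)=\mathsf T\unlhd a\unrhd\mathsf F$, $se(\neg P)=se(P)[\mathsf T\mapsto\mathsf F,\mathsf F\mapsto\mathsf T]$, $se(P\land^\circ Q)=se(P)[\mathsf T\mapsto se(Q)]$, $se(P\lor^\circ Q)=se(P)[\mathsf F\mapsto se(Q)]$. Syntactic categories ($a\in A$): $\mathsf T$-terms $P^{\mathsf T}::=\mathsf T\mid(a\land^\circ P^{\mathsf T})\lor^\circ P^{\mathsf T}$; $\mathsf F$-terms $P^{\mathsf F}::=\mathsf F\mid(a\lor^\circ P^{\mathsf F})\land^\circ P^{\mathsf F}$; $\ell$-terms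 $P^\ell::=(a\land^\circ P^{\mathsf T})\lor^\circ P^{\mathsf F}\mid(\neg a\land^\circ P^{\mathsf T})\lor^\circ P^{\mathsf F}$; $*$-terms $P^*::=P^c\mid P^d$, $P^c::=P^\ell\mid P^*\land^\circ P^d$, $P^d::=P^\ell\mid P^*\lor^\circ P^c$. *)

theory Defs
  imports Main
begin

datatype 'a pterm =
    TT | FF | Atom 'a | Neg "'a pterm"
  | LAnd "'a pterm" "'a pterm"
  | LOr "'a pterm" "'a pterm"

datatype 'a tree = LT | LF | LTri | Node "'a tree" 'a "'a tree"

fun leaves :: "'a tree \<Rightarrow> 'a tree set" where
  "leaves LT = {LT}"
| "leaves LF = {LF}"
| "leaves LTri = {LTri}"
| "leaves (Node X a Y) = leaves X \<union> leaves Y"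

definition in_TA :: "'a tree \<Rightarrow> bool" where
  "in_TA X \<longleftrightarrow> LTri \<notin> leaves X"

fun repl :: "'a tree \<Rightarrow> 'a tree \<Rightarrow> 'a tree \<Rightarrow> 'a tree \<Rightarrow> 'a tree" where
  "repl rT rF rD LT = rT"
| "repl rT rF rD LF = rF"
| "repl rT rF rD LTri = rD"
| "repl rT rF rD (Node X a Y) = Node (repl rT rF rD X) a (repl rT rF rD Y)"

fun se :: "'a pterm \<Rightarrow> 'a tree" where
  "se TT = LT"
| "se FF = LF"
| "se (Atom a) = Node LT a LF"
| "se (Neg P) = repl LF LT LTri (se P)"
| "se (LAnd P Q) = repl (se Q) LF LTri (se P)"
| "se (LOr P Q) = repl LT (se Q) LTri (se P)"

inductive Tterm :: "'a pterm \<Rightarrow> bool" where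
  "Tterm TT"
| "Tterm P \<Longrightarrow> Tterm Q \<Longrightarrow> Tterm (LOr (LAnd (Atom a) P) Q)"

inductive Fterm :: "'a pterm \<Rightarrow> bool" where
  "Fterm FF"
| "Fterm P \<Longrightarrow> Fterm Q \<Longrightarrow> Fterm (LAnd (LOr (Atom a) P) Q)"

inductive lterm :: "'a pterm \<Rightarrow> bool" where
  "Tterm P \<Longrightarrow> Fterm Q \<Longrightarrow> lterm (LOr (LAnd (Atom a) P) Q)"
| "Tterm P \<Longrightarrow> Fterm Q \<Longrightarrow> lterm (LOr (LAnd (Neg (Atom a)) P) Q)"

inductive starterm :: "'a pterm \<Rightarrow> bool"
  and cterm :: "'a pterm \<Rightarrow> bool"
  and dterm :: "'a pterm \<Rightarrow> bool" where
  "cterm P \<Longrightarrow> starterm P"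
| "dterm P \<Longrightarrow> starterm P"
| "lterm P \<Longrightarrow> cterm P"
| "starterm P \<Longrightarrow> dterm Q \<Longrightarrow> cterm (LAnd P Q)"
| "lterm P \<Longrightarrow> dterm P"
| "starterm P \<Longrightarrow> cterm Q \<Longrightarrow> dterm (LOr P Q)"

end

theory Submission
  imports Defs
begin

text \<open>
  If \<open>se P = X[\<triangle> \<mapsto> Y]\<close> with \<open>X \<noteq> \<triangle>\<close> having only \<open>\<triangle>\<close>-leaves, then \<open>se P\<close> is a node
  whose two subtrees are both assembled from copies of \<open>Y\<close>; call a tree primitive if it has
  no such decomposition. For an \<open>\<ell>\<close>-term, \<open>se P\<close> is a node whose subtrees have the disjoint
  leaf sets \<open>{T}\<close> and \<open>{F}\<close>, so it is primitive. Primitivity is preserved when every leaf labelled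
  \<open>l\<close> of a primitive tree is replaced by a primitive tree \<open>S\<close> containing \<open>l\<close>: as \<open>S\<close> has
  only the trivial tiling, every tiling of \<open>Z[l \<mapsto> S]\<close> is the image of a tiling of \<open>Z\<close>, and
  \<open>Z \<mapsto> Z[l \<mapsto> S]\<close> is injective. Since \<open>se (P \<and>\<^sup>\<circ> Q)\<close> and \<open>se (P \<or>\<^sup>\<circ> Q)\<close> are such
  substitutions, all \<open>*\<close>-terms have primitive semantics.
\<close>

fun subst_leaf :: "'a tree \<Rightarrow> 'a tree \<Rightarrow> 'a tree \<Rightarrow> 'a tree" where
  "subst_leaf l S (Node X a Y) = Node (subst_leaf l S X) a (subst_leaf l S Y)"
| "subst_leaf l S W = (if W = l then S else W)"

lemma repl_eq_subst_leaf_LT: "repl S LF LTri W = subst_leaf LT S W"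
  by (induction W) auto

lemma repl_eq_subst_leaf_LF: "repl LT S LTri W = subst_leaf LF S W"
  by (induction W) auto

lemma leaves_subset: "leaves W \<subseteq> {LT, LF, LTri}"
  by (induction W) auto

lemma leaves_nonempty: "leaves W \<noteq> {}"
  by (induction W) auto

lemma leaves_subst_leaf:
  "leaves (subst_leaf l S W) = leaves W - {l} \<union> (if l \<in> leaves W then leaves S else {})"
  by (induction W) auto

lemma subst_leaf_id: "l \<notin> leaves W \<Longrightarrow> subst_leaf l S W = W"
  by (induction W) auto

lemma size_subst_leaf: "l \<in> leaves W \<Longrightarrow> size S \<le> size (subst_leaf l S W)"
  by (induction W) auto

lemma subst_leaf_eq_replacement:
  assumes "l \<in> leaves S" and "subst_leaf l S W = S"
  shows "W = l"
proof (cases W)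
  case (Node X a Y)
  have "l \<in> leaves W"
    using assms subst_leaf_id by metis
  then have "l \<in> leaves X \<or> l \<in> leaves Y"
    using Node by simp
  then have "size S < size (subst_leaf l S W)"
    using Node size_subst_leaf[of l X S] size_subst_leaf[of l Y S] by auto
  with assms show ?thesis by simp
qed (use assms in \<open>auto split: if_splits\<close>)

lemma subst_leaf_self: "l \<in> leaves S \<Longrightarrow> subst_leaf l S l = S"
  using leaves_subset by fastforce

lemma subst_leaf_inj_leaf:
  assumes "l \<in> leaves S" and "W1 \<in> {LT, LF, LTri}"
    and "subst_leaf l S W1 = subst_leaf l S W2"
  shows "W1 = W2"
proof (cases "W1 = l")
  case True
  then show ?thesis
    using assms subst_leaf_eq_replacement subst_leaf_self by metis
next
  case False
  with assms(2,3) have W2: "subst_leaf l S W2 = W1"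
    by auto
  moreover have "W2 \<noteq> l"
  proof
    assume "W2 = l"
    with W2 subst_leaf_self[OF assms(1)] have "S = W1" by simp
    with assms(1,2) False show False by auto
  qed
  ultimately show ?thesis
    using assms(2) by (cases W2) auto
qed

lemma subst_leaf_inj:
  assumes "l \<in> leaves S" and "subst_leaf l S W1 = subst_leaf l S W2"
  shows "W1 = W2"
  using assms(2)
proof (induction W1 arbitrary: W2)
  case (Node X a Y)
  show ?case
  proof (cases W2)
    case (Node X2 b Y2)
    with Node.IH Node.prems show ?thesis by auto
  qed (use Node.prems assms(1) subst_leaf_inj_leaf[of l S W2 "Node X a Y"] in auto)
qed (auto intro: subst_leaf_inj_leaf[OF assms(1)])

text \<open>\<open>tiled Y t\<close> iff \<open>t = X[\<triangle> \<mapsto> Y]\<close> for some \<open>X\<close> all of whose leaves are \<open>\<triangle>\<close>.\<close>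

inductive tiled :: "'a tree \<Rightarrow> 'a tree \<Rightarrow> bool" where
  tiled_refl: "tiled Y Y"
| tiled_Node: "tiled Y t1 \<Longrightarrow> tiled Y t2 \<Longrightarrow> tiled Y (Node t1 a t2)"

definition properly_tiled :: "'a tree \<Rightarrow> 'a tree \<Rightarrow> bool" where
  "properly_tiled Y t \<longleftrightarrow> (\<exists>t1 a t2. t = Node t1 a t2 \<and> tiled Y t1 \<and> tiled Y t2)"

definition primitive_tree :: "'a tree \<Rightarrow> bool" where
  "primitive_tree t \<longleftrightarrow> (\<forall>Y. \<not> properly_tiled Y t)"

lemma tiled_leaves: "tiled Y t \<Longrightarrow> leaves Y \<subseteq> leaves t"
  by (induction rule: tiled.induct) auto

lemma properly_tiledI: "tiled Y t \<Longrightarrow> t \<noteq> Y \<Longrightarrow> properly_tiled Y t"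
  by (induction rule: tiled.induct) (auto simp: properly_tiled_def)

inductive_simps tiled_leaf: "tiled Y LT" "tiled Y LF" "tiled Y LTri"

lemma tiled_repl: "leaves X \<subseteq> {LTri} \<Longrightarrow> tiled Y (repl LT LF Y X)"
  by (induction X) (auto intro: tiled.intros)

lemma properly_tiled_repl:
  "X \<noteq> LTri \<Longrightarrow> leaves X \<subseteq> {LTri} \<Longrightarrow> properly_tiled Y (repl LT LF Y X)"
  by (cases X) (auto simp: properly_tiled_def intro: tiled_repl)

lemma primitive_tree_Node:
  assumes "leaves L \<inter> leaves R = {}"
  shows "primitive_tree (Node L a R)"
  unfolding primitive_tree_def properly_tiled_def
  using assms tiled_leaves leaves_nonempty by blast

lemma primitive_tree_tiled: "primitive_tree S \<Longrightarrow> tiled Y S \<Longrightarrow> Y = S"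
  using properly_tiledI unfolding primitive_tree_def by blast

lemma tiled_subst_leaf:
  assumes "tiled Y (subst_leaf l S Z)" and "l \<in> leaves S" and "primitive_tree S"
  shows "\<exists>Y0. tiled Y0 Z \<and> subst_leaf l S Y0 = Y"
  using assms(1)
proof (induction Z)
  case (Node Z1 a Z2)
  show ?case
  proof (cases "Y = subst_leaf l S (Node Z1 a Z2)")
    case True
    then show ?thesis by (blast intro: tiled_refl)
  next
    case False
    with Node.prems have "tiled Y (subst_leaf l S Z1)" "tiled Y (subst_leaf l S Z2)"
      by (auto elim: tiled.cases)
    with Node.IH obtain Y1 Y2 where
      "tiled Y1 Z1" "subst_leaf l S Y1 = Y" "tiled Y2 Z2" "subst_leaf l S Y2 = Y"
      by blast
    moreover from this have "Y1 = Y2"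
      using subst_leaf_inj[OF assms(2)] by metis
    ultimately show ?thesis by (blast intro: tiled_Node)
  qed
qed (use subst_leaf_self[OF assms(2)] primitive_tree_tiled[OF assms(3), THEN sym] in
      \<open>auto simp: tiled_leaf intro!: exI conjI tiled_refl\<close>)

lemma primitive_tree_subst_leaf:
  assumes "primitive_tree W" and "primitive_tree S" and "l \<in> leaves S"
  shows "primitive_tree (subst_leaf l S W)"
  unfolding primitive_tree_def
proof (intro allI notI)
  fix Y
  assume "properly_tiled Y (subst_leaf l S W)"
  then obtain t1 a t2 where eq: "subst_leaf l S W = Node t1 a t2"
    and tiles: "tiled Y t1" "tiled Y t2"
    unfolding properly_tiled_def by blast
  have "W \<noteq> l"
    using assms(2,3) eq tiles subst_leaf_self
    unfolding primitive_tree_def properly_tiled_def by metis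
  with eq obtain W1 W2 where W: "W = Node W1 a W2"
    and "t1 = subst_leaf l S W1" "t2 = subst_leaf l S W2"
    by (cases W) auto
  with tiles obtain Y1 Y2 where
    "tiled Y1 W1" "subst_leaf l S Y1 = Y" "tiled Y2 W2" "subst_leaf l S Y2 = Y"
    using tiled_subst_leaf[OF _ assms(3,2)] by metis
  moreover from this have "Y1 = Y2"
    using subst_leaf_inj[OF assms(3)] by metis
  ultimately have "properly_tiled Y1 W"
    unfolding W properly_tiled_def by blast
  with assms(1) show False
    unfolding primitive_tree_def by blast
qed

lemma Tterm_leaves: "Tterm P \<Longrightarrow> leaves (se P) = {LT}"
  by (induction rule: Tterm.induct)
    (auto simp: repl_eq_subst_leaf_LT repl_eq_subst_leaf_LF leaves_subst_leaf)

lemma Fterm_leaves: "Fterm P \<Longrightarrow> leaves (se P) = {LF}"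
  by (induction rule: Fterm.induct)
    (auto simp: repl_eq_subst_leaf_LT repl_eq_subst_leaf_LF leaves_subst_leaf)

lemma lterm_se:
  assumes "lterm P"
  shows "\<exists>L a R. se P = Node L a R \<and> {leaves L, leaves R} = {{LT}, {LF}}"
  using assms
proof (cases rule: lterm.cases)
  case (1 P' Q a)
  then have "se P = Node (se P') a (se Q)"
    by (simp add: repl_eq_subst_leaf_LT repl_eq_subst_leaf_LF subst_leaf_id Tterm_leaves)
  with 1 show ?thesis by (auto simp: Tterm_leaves Fterm_leaves)
next
  case (2 P' Q a)
  then have "se P = Node (se Q) a (se P')"
    by (simp add: repl_eq_subst_leaf_LT repl_eq_subst_leaf_LF subst_leaf_id Tterm_leaves)
  with 2 show ?thesis by (auto simp: Tterm_leaves Fterm_leaves)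
qed

lemma lterm_leaves_primitive:
  assumes "lterm P"
  shows "{LT, LF} \<subseteq> leaves (se P)" and "primitive_tree (se P)"
proof -
  obtain L a R where se: "se P = Node L a R" and "{leaves L, leaves R} = {{LT}, {LF}}"
    using lterm_se[OF assms] by blast
  then have "{LT, LF} \<subseteq> leaves L \<union> leaves R" and "leaves L \<inter> leaves R = {}"
    by (auto simp: doubleton_eq_iff)
  with se show "{LT, LF} \<subseteq> leaves (se P)" and "primitive_tree (se P)"
    by (simp_all add: primitive_tree_Node)
qed

lemma starterm_leaves:
  "starterm P \<Longrightarrow> {LT, LF} \<subseteq> leaves (se P)"
  "cterm P \<Longrightarrow> {LT, LF} \<subseteq> leaves (se P)"
  "dterm P \<Longrightarrow> {LT, LF} \<subseteq> leaves (se P)"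
proof (induction rule: starterm_cterm_dterm.inducts)
  case (3 P)
  then show ?case by (rule lterm_leaves_primitive(1))
next
  case (4 P Q)
  then show ?case by (simp add: repl_eq_subst_leaf_LT leaves_subst_leaf)
next
  case (5 P)
  then show ?case by (rule lterm_leaves_primitive(1))
next
  case (6 P Q)
  then show ?case by (simp add: repl_eq_subst_leaf_LF leaves_subst_leaf)
qed simp_all

lemma starterm_primitive:
  "starterm P \<Longrightarrow> primitive_tree (se P)"
  "cterm P \<Longrightarrow> primitive_tree (se P)"
  "dterm P \<Longrightarrow> primitive_tree (se P)"
proof (induction rule: starterm_cterm_dterm.inducts)
  case (4 P Q)
  have "LT \<in> leaves (se Q)"
    using starterm_leaves(3)[OF \<open>dterm Q\<close>] by simp
  with 4 show ?case
    by (simp add: repl_eq_subst_leaf_LT primitive_tree_subst_leaf)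
next
  case (6 P Q)
  have "LF \<in> leaves (se Q)"
    using starterm_leaves(2)[OF \<open>cterm Q\<close>] by simp
  with 6 show ?case
    by (simp add: repl_eq_subst_leaf_LF primitive_tree_subst_leaf)
qed (simp_all add: lterm_leaves_primitive)

theorem lemma3p3:
  "\<not> (\<exists>(P :: 'a pterm) X Y.
        starterm P \<and> in_TA Y \<and> X \<noteq> LTri \<and> LTri \<in> leaves X
        \<and> LT \<notin> leaves X \<and> LF \<notin> leaves X
        \<and> se P = repl LT LF Y X)"
proof (intro notI, elim exE conjE)
  fix P :: "'a pterm" and X Y
  assume P: "starterm P" and X: "X \<noteq> LTri" "LT \<notin> leaves X" "LF \<notin> leaves X"
    and se: "se P = repl LT LF Y X"
  have "leaves X \<subseteq> {LTri}"
    using X leaves_subset[of X] by blast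
  with X(1) se have "properly_tiled Y (se P)"
    by (simp add: properly_tiled_repl)
  moreover have "primitive_tree (se P)"
    using P by (rule starterm_primitive(1))
  ultimately show False
    unfolding primitive_tree_def by blast
qed

end
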